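(* Let $0<b<1$ and let $\infty U$ denote the generic random tree measure associated with the generalised uniform offspring distribution $p^U_0=b$, $p^U_k=b^{k-1}(1-b)^2$ ($k\ge1$). Then for every $k\ge1$, $$\mathbb{E}_{\infty U}\big[|D_k|^{-1}\big]=\frac{1}{1+(k-1)b(1-b)^{-1}}=\frac{1}{1+{f^U}''(1)(k-1)/2},$$ where $f^U(x)=\sum_kp^U_kx^k$.
   Context: Trees are planar rooted trees with root of degree $1$; $D_k(T)$ is the set of edges joining vertices at height $k-1$ to vertices at height $k$ (height = graph distance from the root). The Galton–Watson tree starts with a single individual at height $1$ attached to the root, individuals independently having $j$ children with probability $p_j$. The generic random tree measure $\infty U$ is the weak limit as $N\to\infty$ of the Galton–Watson measure conditioned to have $N$ edges (equivalently, the Galton–Watson process with distribution $p^U$ conditioned never to die out); it is concentrated on infinite trees with a unique infinite spine. *)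

theory Defs
  imports "HOL-Analysis.Analysis"
begin

text \<open>Finite planar rooted trees: a vertex is given by the ordered list of its children.\<close>
datatype ptree = Node "ptree list"

fun edges :: "ptree \<Rightarrow> nat" where
  "edges (Node cs) = length cs + sum_list (map edges cs)"

text \<open>Number of vertices at height k (graph distance from the root).  For k \<ge> 1 this is
  the cardinality of D_k(T), the set of edges joining height k-1 to height k.\<close>
fun level :: "nat \<Rightarrow> ptree \<Rightarrow> nat" where
  "level 0 t = 1"
| "level (Suc k) (Node cs) = sum_list (map (level k) cs)"

abbreviation Dcard :: "nat \<Rightarrow> ptree \<Rightarrow> nat" where
  "Dcard k T \<equiv> level k T"

fun gw_weight :: "(nat \<Rightarrow> real) \<Rightarrow> ptree \<Rightarrow> real" where
  "gw_weight p (Node cs) = p (length cs) * prod_list (map (gw_weight p) cs)"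

text \<open>Galton--Watson measure on trees whose root has degree 1: one individual at height 1
  attached to the root.\<close>
definition gw :: "(nat \<Rightarrow> real) \<Rightarrow> ptree \<Rightarrow> real" where
  "gw p T = (case T of Node [t] \<Rightarrow> gw_weight p t | _ \<Rightarrow> 0)"

definition gw_cond_exp :: "(nat \<Rightarrow> real) \<Rightarrow> nat \<Rightarrow> (ptree \<Rightarrow> real) \<Rightarrow> real" where
  "gw_cond_exp p N f =
     (\<Sum>T\<in>{T. edges T = N}. gw p T * f T) / (\<Sum>T\<in>{T. edges T = N}. gw p T)"

definition pU :: "real \<Rightarrow> nat \<Rightarrow> real" where
  "pU b k = (if k = 0 then b else b ^ (k - 1) * (1 - b)^2)"

definition fU :: "real \<Rightarrow> real \<Rightarrow> real" where
  "fU b x = (\<Sum>k. pU b k * x ^ k)"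

end

theory Submission
  imports Defs
begin

text \<open>
  Under the Galton--Watson measure conditioned on \<open>n\<close> edges, the size \<open>Z\<close> of a fixed generation
  becomes size-biased in the limit: the mass of trees with \<open>n\<close> edges and \<open>Z = m\<close>, divided by the
  mass \<open>a n\<close> of all trees with \<open>n\<close> edges, tends to \<open>m P(Z = m)\<close>.  Lower bounds for these ratios
  follow by induction on the generation from the recursive structure of trees, using only that
  \<open>a\<close> is decreasing (only the two ends of each convolution survive); as both sides are probability
  vectors, a discrete Scheffe argument turns them into convergence of \<open>E (g Z)\<close> for bounded \<open>g\<close>.
  With \<open>g m = 1 / m\<close> the limit is \<open>P(Z > 0)\<close>.

  For the generalised uniform law the generating function of \<open>a\<close> satisfies a quadratic equation;
  the discriminant gives a three-term recurrence making \<open>a\<close> decreasing, and its behaviour at 1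
  shows that \<open>a\<close> sums to 1.  The offspring generating function \<open>f\<close> is fractional linear, so the
  extinction probabilities \<open>q j\<close> by generation \<open>j\<close> satisfy \<open>1 / (1 - q j) = 1 + j f''(1) / 2\<close>.
\<close>

section \<open>Trees, forests and their Galton--Watson masses\<close>

definition trees :: "nat \<Rightarrow> ptree set" where
  "trees n = {t. edges t = n}"

definition forests :: "nat \<Rightarrow> nat \<Rightarrow> ptree list set" where
  "forests d n = {cs. length cs = d \<and> sum_list (map edges cs) = n}"

definition tree_mass :: "(nat \<Rightarrow> real) \<Rightarrow> nat \<Rightarrow> real" where
  "tree_mass p n = (\<Sum>t\<in>trees n. gw_weight p t)"

definition level_mass :: "(nat \<Rightarrow> real) \<Rightarrow> nat \<Rightarrow> nat \<Rightarrow> nat \<Rightarrow> real" where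
  "level_mass p j n m = (\<Sum>t\<in>{t\<in>trees n. level j t = m}. gw_weight p t)"

definition forest_level_mass :: "(nat \<Rightarrow> real) \<Rightarrow> nat \<Rightarrow> nat \<Rightarrow> nat \<Rightarrow> nat \<Rightarrow> real" where
  "forest_level_mass p j d n m =
     (\<Sum>cs\<in>{cs\<in>forests d n. sum_list (map (level j) cs) = m}. prod_list (map (gw_weight p) cs))"

lemma edges_le_sum_list: "c \<in> set cs \<Longrightarrow> edges c \<le> sum_list (map edges cs)"
  by (simp add: member_le_sum_list)

lemma finite_trees: "finite (trees n)"
proof (induction n rule: less_induct)
  case (less n)
  have "trees n \<subseteq> Node ` {cs. set cs \<subseteq> (\<Union>i<n. trees i) \<and> length cs \<le> n}"
  proof
    fix t assume "t \<in> trees n"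
    then obtain cs where t: "t = Node cs" and n: "n = length cs + sum_list (map edges cs)"
      by (cases t) (auto simp: trees_def)
    have "edges c < n" if "c \<in> set cs" for c
      using edges_le_sum_list[OF that] that n by (cases cs) auto
    then show "t \<in> Node ` {cs. set cs \<subseteq> (\<Union>i<n. trees i) \<and> length cs \<le> n}"
      using t n by (auto simp: trees_def)
  qed
  moreover have "finite {cs. set cs \<subseteq> (\<Union>i<n. trees i) \<and> length cs \<le> n}"
    using less by (intro finite_lists_length_le) auto
  ultimately show ?case
    by (meson finite_imageI finite_subset)
qed

lemma finite_forests: "finite (forests d n)"
proof (rule finite_subset)
  show "forests d n \<subseteq> {cs. set cs \<subseteq> (\<Union>i\<le>n. trees i) \<and> length cs = d}"
    by (auto simp: forests_def trees_def dest: edges_le_sum_list)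
  show "finite {cs. set cs \<subseteq> (\<Union>i\<le>n. trees i) \<and> length cs = d}"
    by (intro finite_lists_length_eq) (auto intro: finite_trees)
qed

lemma finite_trees_filter [simp]: "finite {t\<in>trees n. P t}"
  using finite_trees by simp

lemma finite_forests_filter [simp]: "finite {cs\<in>forests d n. P cs}"
  using finite_forests by simp

lemma trees_0: "trees 0 = {Node []}"
proof -
  have "edges t = 0 \<longleftrightarrow> t = Node []" for t
    by (cases t) auto
  then show ?thesis
    by (auto simp: trees_def)
qed

lemma level_le_edges: "level j t \<le> edges t + 1"
proof (induction t arbitrary: j)
  case (Node cs)
  show ?case
  proof (cases j)
    case (Suc j')
    have "level j (Node cs) \<le> sum_list (map (\<lambda>c. edges c + 1) cs)"
      using Suc Node by (auto intro: sum_list_mono)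
    also have "\<dots> = edges (Node cs)"
      by (induction cs) auto
    finally show ?thesis
      by simp
  qed simp
qed

lemma gw_weight_nonneg: "(\<And>d. 0 \<le> p d) \<Longrightarrow> 0 \<le> gw_weight p t"
  by (induction t) (auto intro!: mult_nonneg_nonneg prod_list_nonneg)

lemma tree_mass_nonneg: "(\<And>d. 0 \<le> p d) \<Longrightarrow> 0 \<le> tree_mass p n"
  by (auto simp: tree_mass_def intro!: sum_nonneg gw_weight_nonneg)

lemma level_mass_nonneg: "(\<And>d. 0 \<le> p d) \<Longrightarrow> 0 \<le> level_mass p j n m"
  by (auto simp: level_mass_def intro!: sum_nonneg gw_weight_nonneg)

lemma forest_level_mass_nonneg: "(\<And>d. 0 \<le> p d) \<Longrightarrow> 0 \<le> forest_level_mass p j d n m"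
  by (auto simp: forest_level_mass_def intro!: sum_nonneg prod_list_nonneg gw_weight_nonneg)

lemma level_mass_eq_0:
  assumes "n + 1 < m"
  shows "level_mass p j n m = 0"
proof -
  have no_tree: "{t\<in>trees n. level j t = m} = {}"
    using assms level_le_edges[of j] by (auto simp: trees_def) (metis leD)
  show ?thesis
    by (simp only: level_mass_def no_tree sum.empty)
qed

lemma sum_trees_by_level:
  "(\<Sum>t\<in>trees n. gw_weight p t * g (level j t)) = (\<Sum>m\<le>n+1. level_mass p j n m * g m)"
proof -
  have "(\<Sum>t\<in>trees n. gw_weight p t * g (level j t))
      = (\<Sum>t\<in>trees n. \<Sum>m\<le>n+1. if level j t = m then gw_weight p t * g m else 0)"
  proof (rule sum.cong)
    fix t assume "t \<in> trees n"
    then have "level j t \<in> {..n+1}"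
      using level_le_edges[of j t] by (simp add: trees_def)
    then show "gw_weight p t * g (level j t)
        = (\<Sum>m\<le>n+1. if level j t = m then gw_weight p t * g m else 0)"
      by (simp add: sum.delta)
  qed simp
  also have "\<dots> = (\<Sum>m\<le>n+1. level_mass p j n m * g m)"
    by (subst sum.swap)
       (simp add: level_mass_def sum.inter_filter[symmetric] finite_trees sum_distrib_right)
  finally show ?thesis .
qed

lemma sum_level_mass: "(\<Sum>m\<le>n+1. level_mass p j n m) = tree_mass p n"
  using sum_trees_by_level[where g = "\<lambda>_. 1"] by (simp add: tree_mass_def)

lemma level_mass_sums: "(\<lambda>m. level_mass p j n m) sums tree_mass p n"
proof -
  have "(\<lambda>m. level_mass p j n m) sums (\<Sum>m\<le>n+1. level_mass p j n m)"
    by (rule sums_finite) (auto intro: level_mass_eq_0)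
  then show ?thesis
    by (simp only: sum_level_mass)
qed

lemma level_mass_0: "level_mass p 0 n m = (if m = 1 then tree_mass p n else 0)"
  by (simp add: level_mass_def tree_mass_def)

lemma level_mass_Suc:
  "level_mass p (Suc j) n m = (\<Sum>d\<le>n. p d * forest_level_mass p j d (n - d) m)"
proof -
  have "level_mass p (Suc j) n m
      = (\<Sum>(d, cs)\<in>(SIGMA d:{..n}. {cs\<in>forests d (n - d). sum_list (map (level j) cs) = m}).
           p d * prod_list (map (gw_weight p) cs))"
    unfolding level_mass_def
    by (rule sum.reindex_bij_witness[where i = "\<lambda>(d, cs). Node cs"
          and j = "\<lambda>t. case t of Node cs \<Rightarrow> (length cs, cs)"])
       (auto simp: forests_def trees_def split: ptree.splits)
  also have "\<dots> = (\<Sum>d\<le>n. p d * forest_level_mass p j d (n - d) m)"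
    by (subst sum.Sigma[symmetric]) (auto simp: forest_level_mass_def sum_distrib_left)
  finally show ?thesis .
qed

lemma forest_level_mass_0: "forest_level_mass p j 0 n m = (if n = 0 \<and> m = 0 then 1 else 0)"
proof -
  have "{cs\<in>forests 0 n. sum_list (map (level j) cs) = m} = (if n = 0 \<and> m = 0 then {[]} else {})"
    by (auto simp: forests_def)
  then show ?thesis
    by (simp add: forest_level_mass_def)
qed

lemma forest_level_mass_Suc:
  "forest_level_mass p j (Suc d) n m
     = (\<Sum>m'\<le>m. \<Sum>i\<le>n. level_mass p j i m' * forest_level_mass p j d (n - i) (m - m'))"
proof -
  define B where "B = (\<lambda>(m', i). {t\<in>trees i. level j t = m'}
                      \<times> {cs\<in>forests d (n - i). sum_list (map (level j) cs) = m - m'})"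
  have "forest_level_mass p j (Suc d) n m
      = (\<Sum>(x, c, cs)\<in>Sigma ({..m} \<times> {..n}) B. gw_weight p c * prod_list (map (gw_weight p) cs))"
    unfolding forest_level_mass_def B_def
    by (rule sum.reindex_bij_witness[where i = "\<lambda>(x, c, cs). c # cs"
          and j = "\<lambda>cs. ((level j (hd cs), edges (hd cs)), hd cs, tl cs)"])
       (auto simp: forests_def trees_def length_Suc_conv)
  also have "\<dots> = (\<Sum>(m', i)\<in>{..m} \<times> {..n}.
                     level_mass p j i m' * forest_level_mass p j d (n - i) (m - m'))"
    by (subst sum.Sigma[symmetric])
       (auto simp: B_def level_mass_def forest_level_mass_def sum_product sum.cartesian_product
             intro!: sum.cong)
  finally show ?thesis
    by (simp add: sum.cartesian_product)
qed

fun graft :: "ptree \<Rightarrow> ptree \<Rightarrow> ptree" where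
  "graft c (Node cs) = Node (c # cs)"

lemma edges_graft [simp]: "edges (graft c t) = Suc (edges c + edges t)"
  by (cases t) simp

lemma sum_trees_Suc:
  "(\<Sum>t\<in>trees (Suc n). F t) = (\<Sum>i\<le>n. \<Sum>c\<in>trees i. \<Sum>t\<in>trees (n - i). F (graft c t))"
proof -
  have "(\<Sum>t\<in>trees (Suc n). F t)
      = (\<Sum>(i, c, t)\<in>(SIGMA i:{..n}. trees i \<times> trees (n - i)). F (graft c t))"
    by (rule sum.reindex_bij_witness[where i = "\<lambda>(i, c, t). graft c t"
          and j = "\<lambda>t. case t of Node (c # cs) \<Rightarrow> (edges c, c, Node cs)"])
       (auto simp: trees_def split: ptree.splits list.splits elim!: graft.elims)
  also have "\<dots> = (\<Sum>i\<le>n. \<Sum>c\<in>trees i. \<Sum>t\<in>trees (n - i). F (graft c t))"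
    by (subst sum.Sigma[symmetric]) (auto simp: sum.cartesian_product finite_trees)
  finally show ?thesis .
qed

lemma gw_weight_graft:
  assumes "\<And>d. p (Suc (Suc d)) = b * p (Suc d)"
  shows "gw_weight p (graft c t)
           = gw_weight p c * (b * gw_weight p t + (if t = Node [] then p 1 - b * p 0 else 0))"
proof (cases t)
  case (Node cs)
  then show ?thesis
    using assms by (cases cs) (simp_all add: algebra_simps)
qed

lemma tree_mass_Suc_geometric:
  assumes "\<And>d. p (Suc (Suc d)) = b * p (Suc d)"
  shows "tree_mass p (Suc n)
           = b * (\<Sum>i\<le>n. tree_mass p i * tree_mass p (n - i)) + (p 1 - b * p 0) * tree_mass p n"
proof -
  have root_only: "(\<Sum>t\<in>trees (n - i). if t = Node [] then x else 0) = (if i = n then x else 0)"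
    if "i \<le> n" for i and x :: real
  proof (cases "i = n")
    case False
    then have "Node [] \<notin> trees (n - i)"
      using that by (simp add: trees_def)
    then show ?thesis
      using False by (auto intro!: sum.neutral)
  qed (simp add: trees_0)
  have "tree_mass p (Suc n)
      = (\<Sum>i\<le>n. tree_mass p i * (b * tree_mass p (n - i) + (if i = n then p 1 - b * p 0 else 0)))"
    unfolding tree_mass_def[of p "Suc n"] sum_trees_Suc gw_weight_graft[of p b, OF assms]
  proof (rule sum.cong)
    fix i assume "i \<in> {..n}"
    then show "(\<Sum>c\<in>trees i. \<Sum>t\<in>trees (n - i).
                 gw_weight p c * (b * gw_weight p t + (if t = Node [] then p 1 - b * p 0 else 0)))
        = tree_mass p i * (b * tree_mass p (n - i) + (if i = n then p 1 - b * p 0 else 0))"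
      by (simp add: sum_product[symmetric] sum.distrib sum_distrib_left root_only tree_mass_def)
  qed simp
  also have "\<dots> = (\<Sum>i\<le>n. b * (tree_mass p i * tree_mass p (n - i)))
                  + (\<Sum>i\<le>n. if i = n then (p 1 - b * p 0) * tree_mass p i else 0)"
    by (subst sum.distrib[symmetric]) (auto intro!: sum.cong simp: algebra_simps)
  also have "\<dots> = b * (\<Sum>i\<le>n. tree_mass p i * tree_mass p (n - i)) + (p 1 - b * p 0) * tree_mass p n"
    by (simp add: sum_distrib_left)
  finally show ?thesis .
qed

fun path_tree :: "nat \<Rightarrow> ptree" where
  "path_tree 0 = Node []"
| "path_tree (Suc n) = Node [path_tree n]"

lemma tree_mass_pos:
  assumes "\<And>d. 0 \<le> p d" "0 < p 0" "0 < p 1"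
  shows "0 < tree_mass p n"
proof -
  have "edges (path_tree n) = n"
    by (induction n) auto
  moreover have "0 < gw_weight p (path_tree n)"
    using assms(2,3) by (induction n) auto
  ultimately show ?thesis
    unfolding tree_mass_def using assms(1)
    by (intro sum_pos2[where i = "path_tree n"])
       (auto simp: trees_def finite_trees[unfolded trees_def] intro: gw_weight_nonneg)
qed

lemma sum_gw_edges_Suc:
  "(\<Sum>T\<in>{T. edges T = Suc n}. gw p T * F T) = (\<Sum>t\<in>trees n. gw_weight p t * F (Node [t]))"
proof -
  have "gw p T = 0" if "T \<notin> (\<lambda>t. Node [t]) ` trees n" "edges T = Suc n" for T
  proof -
    have "T \<noteq> Node [t]" for t
      using that by (auto simp: trees_def)
    then show ?thesis
      by (auto simp: gw_def split: ptree.split list.split)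
  qed
  then have "(\<Sum>T\<in>{T. edges T = Suc n}. gw p T * F T) = (\<Sum>T\<in>(\<lambda>t. Node [t]) ` trees n. gw p T * F T)"
    using finite_trees[of "Suc n"]
    by (intro sum.mono_neutral_right) (auto simp: trees_def)
  also have "\<dots> = (\<Sum>t\<in>trees n. gw_weight p t * F (Node [t]))"
    by (subst sum.reindex) (auto simp: inj_on_def gw_def)
  finally show ?thesis .
qed

lemma gw_cond_exp_Suc:
  "gw_cond_exp p (Suc n) F = (\<Sum>t\<in>trees n. gw_weight p t * F (Node [t])) / tree_mass p n"
  using sum_gw_edges_Suc[where F = F] sum_gw_edges_Suc[where F = "\<lambda>_. 1"]
  by (simp add: gw_cond_exp_def tree_mass_def)

lemma gw_cond_exp_Suc_inverse_level:
  "gw_cond_exp p (Suc n) (\<lambda>T. 1 / real (level (Suc j) T))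
     = (\<Sum>m. level_mass p j n m / tree_mass p n * (1 / real m))"
proof -
  have "(\<Sum>m. level_mass p j n m / tree_mass p n * (1 / real m))
      = (\<Sum>m\<le>n+1. level_mass p j n m / tree_mass p n * (1 / real m))"
    by (rule suminf_finite) (auto simp: level_mass_eq_0)
  also have "\<dots> = (\<Sum>m\<le>n+1. level_mass p j n m * (1 / real m)) / tree_mass p n"
    unfolding sum_divide_distrib by (intro sum.cong) auto
  also have "\<dots> = (\<Sum>t\<in>trees n. gw_weight p t * (1 / real (level j t))) / tree_mass p n"
    using sum_trees_by_level[where g = "\<lambda>m. 1 / real m" and p = p and n = n and j = j] by simp
  also have "\<dots> = gw_cond_exp p (Suc n) (\<lambda>T. 1 / real (level (Suc j) T))"
    by (simp add: gw_cond_exp_Suc)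
  finally show ?thesis
    by (rule sym)
qed

section \<open>Nonnegative series\<close>

lemma term_le_sums:
  fixes f :: "nat \<Rightarrow> real"
  assumes "\<And>n. 0 \<le> f n" and "f sums s"
  shows "f k \<le> s"
  using sum_le_suminf[of f "{k}"] assms by (auto simp: sums_iff)

lemma Cauchy_product_sums_nonneg:
  fixes f g :: "nat \<Rightarrow> real"
  assumes "\<And>n. 0 \<le> f n" "\<And>n. 0 \<le> g n" and "f sums s" "g sums t"
  shows "(\<lambda>k. \<Sum>i\<le>k. f i * g (k - i)) sums (s * t)"
  using Cauchy_product_sums[of f g] assms by (simp add: sums_iff)

lemma has_sum_double_nonneg:
  fixes g :: "nat \<Rightarrow> nat \<Rightarrow> real"
  assumes nonneg: "\<And>i j. 0 \<le> g i j" and rows: "\<And>i. g i sums s i" and total: "s sums S"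
  shows "((\<lambda>(i, j). g i j) has_sum S) UNIV"
proof -
  have rows': "(g i has_sum s i) UNIV" for i
    using rows nonneg by (rule sums_nonneg_imp_has_sum)
  have s_nonneg: "0 \<le> s i" for i
    using rows' nonneg by (rule has_sum_nonneg)
  have total': "(s has_sum S) UNIV"
    using total s_nonneg by (rule sums_nonneg_imp_has_sum)
  have "(\<lambda>(i, j). g i j) summable_on UNIV \<times> UNIV"
    using rows' total' nonneg
    by (intro summable_on_SigmaI[where g = s]) (auto intro: has_sum_imp_summable)
  then show ?thesis
    using rows' total' by (subst UNIV_Times_UNIV[symmetric], intro has_sum_SigmaI[where g = s]) auto
qed

lemma sums_swap_nonneg:
  fixes g :: "nat \<Rightarrow> nat \<Rightarrow> real"
  assumes nonneg: "\<And>i j. 0 \<le> g i j" and "\<And>i. g i sums s i" and "s sums S"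
  shows "(\<lambda>j. \<Sum>i. g i j) sums S" and "summable (\<lambda>i. g i j)"
proof -
  have swapped: "((\<lambda>(j, i). g i j) has_sum S) (UNIV \<times> UNIV)"
    using has_sum_swap[THEN iffD1,
        OF has_sum_double_nonneg[OF assms, unfolded UNIV_Times_UNIV[symmetric]]]
    by simp
  have summable_col: "summable (\<lambda>i. g i j)" for j
    using summable_on_SigmaD1[of "\<lambda>j i. g i j", OF has_sum_imp_summable[OF swapped]]
    by (simp add: summable_on_UNIV_nonneg_real_iff nonneg)
  then show "summable (\<lambda>i. g i j)" .
  have cols: "((\<lambda>i. g i j) has_sum (\<Sum>i. g i j)) UNIV" for j
    using nonneg summable_col by (intro sums_nonneg_imp_has_sum summable_sums)
  have "((\<lambda>j. \<Sum>i. g i j) has_sum S) UNIV"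
    using swapped by (rule has_sum_Sigma') (simp add: cols)
  then show "(\<lambda>j. \<Sum>i. g i j) sums S"
    by (rule has_sum_imp_sums)
qed

lemma sums_diagonal_nonneg:
  fixes g :: "nat \<Rightarrow> nat \<Rightarrow> real"
  assumes "\<And>i j. 0 \<le> g i j" and "\<And>i. g i sums s i" and "s sums S"
  shows "(\<lambda>n. \<Sum>i\<le>n. g i (n - i)) sums S"
proof -
  have bij: "bij_betw (\<lambda>(n, i). (i, n - i)) (SIGMA n:UNIV. {..n::nat}) UNIV"
    by (rule bij_betw_byWitness[where f' = "\<lambda>(i, j). (i + j, i)"]) (auto simp: image_iff)
  have "((\<lambda>(n, i). g i (n - i)) has_sum S) (SIGMA n:UNIV. {..n})"
    using has_sum_reindex_bij_betw[OF bij, of "\<lambda>(i, j). g i j" S] has_sum_double_nonneg[OF assms]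
    by (simp add: case_prod_unfold)
  then have "((\<lambda>n. \<Sum>i\<le>n. g i (n - i)) has_sum S) UNIV"
    by (rule has_sum_Sigma') (simp add: has_sum_finite)
  then show ?thesis
    by (rule has_sum_imp_sums)
qed

lemma nonneg_power_series_sums_of_tendsto_left:
  fixes a :: "nat \<Rightarrow> real"
  assumes nonneg: "\<And>n. 0 \<le> a n"
    and summable: "\<And>z. 0 \<le> z \<Longrightarrow> z < 1 \<Longrightarrow> summable (\<lambda>n. a n * z ^ n)"
    and lim: "((\<lambda>z. \<Sum>n. a n * z ^ n) \<longlongrightarrow> L) (at_left 1)"
  shows "a sums L"
proof -
  have near_1: "eventually (\<lambda>z. 0 \<le> z \<and> z < (1::real)) (at_left 1)"
    using eventually_at_left_real[of 0 "1::real"] by (auto elim: eventually_mono)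
  have partial_le: "(\<Sum>n<N. a n) \<le> L" for N
  proof (rule tendsto_le[OF _ lim])
    show "((\<lambda>z. \<Sum>n<N. a n * z ^ n) \<longlongrightarrow> (\<Sum>n<N. a n)) (at_left 1)"
      by (rule tendsto_eq_intros refl | simp)+
    show "eventually (\<lambda>z. (\<Sum>n<N. a n * z ^ n) \<le> (\<Sum>n. a n * z ^ n)) (at_left 1)"
      using near_1
      by eventually_elim (auto intro!: sum_le_suminf summable mult_nonneg_nonneg nonneg)
  qed simp
  have summable_a: "summable a"
    using nonneg partial_le by (rule summableI_nonneg_bounded)
  have "L \<le> suminf a"
  proof (rule tendsto_le[OF _ tendsto_const lim])
    show "eventually (\<lambda>z. (\<Sum>n. a n * z ^ n) \<le> suminf a) (at_left 1)"
      using near_1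
      by eventually_elim
         (auto intro!: suminf_le summable summable_a mult_left_le power_le_one nonneg)
  qed simp
  moreover have "suminf a \<le> L"
    using summable_a partial_le by (rule suminf_le_const)
  ultimately show ?thesis
    using summable_a by (simp add: sums_iff)
qed

lemma summable_mult_bounded:
  fixes w g :: "nat \<Rightarrow> real"
  assumes "\<And>m. 0 \<le> w m" "summable w" "\<And>m. \<bar>g m\<bar> \<le> B"
  shows "summable (\<lambda>m. w m * g m)"
proof (rule summable_comparison_test')
  show "summable (\<lambda>m. \<bar>B\<bar> * w m)"
    using assms(2) by (rule summable_mult)
  show "norm (w m * g m) \<le> \<bar>B\<bar> * w m" for m
    using assms(1)[of m] assms(3)[of m] by (simp add: abs_mult) (metis mult.commute mult_right_mono)
qed

text \<open>For probability vectors \<open>q\<close> and \<open>r\<close>, the total variation \<open>\<Sum>m. \<bar>q m - r m\<bar>\<close> is twice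
  the deficit \<open>\<Sum>m. max 0 (r m - q m)\<close>.\<close>

lemma suminf_mult_bounded_diff_le:
  fixes q r g :: "nat \<Rightarrow> real"
  assumes q: "\<And>m. 0 \<le> q m" "q sums 1" and r: "\<And>m. 0 \<le> r m" "r sums 1"
    and bounded: "\<And>m. \<bar>g m\<bar> \<le> B"
  shows "\<bar>(\<Sum>m. q m * g m) - (\<Sum>m. r m * g m)\<bar> \<le> \<bar>B\<bar> * (2 * (\<Sum>m. max 0 (r m - q m)))"
proof -
  have deficit_sums:
    "(\<lambda>m. q m - r m + 2 * max 0 (r m - q m)) sums (1 - 1 + 2 * (\<Sum>m. max 0 (r m - q m)))"
    using q r
    by (intro sums_add sums_diff sums_mult summable_sums
          summable_comparison_test'[OF sums_summable[OF r(2)]])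
       auto
  have pointwise: "norm (q m * g m - r m * g m) \<le> \<bar>B\<bar> * (q m - r m + 2 * max 0 (r m - q m))" for m
  proof -
    have "norm (q m * g m - r m * g m) = \<bar>q m - r m\<bar> * \<bar>g m\<bar>"
      by (simp add: abs_mult left_diff_distrib[symmetric])
    also have "\<dots> \<le> \<bar>q m - r m\<bar> * \<bar>B\<bar>"
      using bounded[of m] by (intro mult_left_mono) auto
    also have "\<bar>q m - r m\<bar> = q m - r m + 2 * max 0 (r m - q m)"
      by (simp add: max_def)
    finally show ?thesis
      by (simp add: mult.commute)
  qed
  have "(\<Sum>m. q m * g m) - (\<Sum>m. r m * g m) = (\<Sum>m. q m * g m - r m * g m)"
    using summable_mult_bounded[OF q(1) sums_summable[OF q(2)] bounded]
      summable_mult_bounded[OF r(1) sums_summable[OF r(2)] bounded] by (rule suminf_diff)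
  moreover have "norm (\<Sum>m. q m * g m - r m * g m) \<le> (\<Sum>m. \<bar>B\<bar> * (q m - r m + 2 * max 0 (r m - q m)))"
    using pointwise deficit_sums by (intro norm_suminf_le sums_summable[OF sums_mult])
  moreover have "(\<Sum>m. \<bar>B\<bar> * (q m - r m + 2 * max 0 (r m - q m)))
      = \<bar>B\<bar> * (2 * (\<Sum>m. max 0 (r m - q m)))"
    using sums_mult[OF deficit_sums, of "\<bar>B\<bar>"] by (simp add: sums_iff)
  ultimately show ?thesis
    by simp
qed

text \<open>A discrete form of Scheffe's lemma: a lower bound on the pointwise liminf of probability
  vectors by a probability vector already forces convergence in total variation.\<close>

lemma scheffe_tendsto_suminf:
  fixes q :: "nat \<Rightarrow> nat \<Rightarrow> real" and r g :: "nat \<Rightarrow> real"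
  assumes q: "\<And>n m. 0 \<le> q n m" "\<And>n. q n sums 1" and r: "\<And>m. 0 \<le> r m" "r sums 1"
    and liminf: "\<And>m c. c < r m \<Longrightarrow> eventually (\<lambda>n. c \<le> q n m) sequentially"
    and bounded: "\<And>m. \<bar>g m\<bar> \<le> B"
  shows "(\<lambda>n. \<Sum>m. q n m * g m) \<longlonglongrightarrow> (\<Sum>m. r m * g m)"
proof -
  define d where "d n m = max 0 (r m - q n m)" for n m
  have d_bounds: "0 \<le> d n m" "d n m \<le> r m" for n m
    using q(1)[of n m] r(1)[of m] by (auto simp: d_def)
  have "(\<lambda>n. d n m) \<longlonglongrightarrow> 0" for m
  proof (rule order_tendstoI)
    fix y :: real assume "y < 0"
    then show "eventually (\<lambda>n. y < d n m) sequentially"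
      using d_bounds(1) by (intro always_eventually allI) (rule less_le_trans)
  next
    fix y :: real assume "0 < y"
    then have "eventually (\<lambda>n. r m - y / 2 \<le> q n m) sequentially"
      by (intro liminf) simp
    then show "eventually (\<lambda>n. d n m < y) sequentially"
      by eventually_elim (use \<open>0 < y\<close> in \<open>auto simp: d_def\<close>)
  qed
  moreover have "eventually (\<lambda>(m, n). norm (d n m) \<le> r m) (at_top \<times>\<^sub>F sequentially)"
    using d_bounds by (intro always_eventually) auto
  ultimately have d_sum_lim: "(\<lambda>n. \<Sum>m. d n m) \<longlonglongrightarrow> 0"
    using tannerys_theorem[where a = "\<lambda>m n. d n m" and b = "\<lambda>_. 0" and M = r and F = sequentially]
      sums_summable[OF r(2)] by simp
  have "\<forall>n. norm ((\<Sum>m. q n m * g m) - (\<Sum>m. r m * g m)) \<le> \<bar>B\<bar> * (2 * (\<Sum>m. d n m))"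
    using suminf_mult_bounded_diff_le[OF q(1) q(2) r bounded] by (simp add: d_def)
  moreover have "(\<lambda>n. \<bar>B\<bar> * (2 * (\<Sum>m. d n m))) \<longlonglongrightarrow> 0"
    using tendsto_mult_right_zero[OF tendsto_mult_right_zero[OF d_sum_lim]] by simp
  ultimately have "(\<lambda>n. (\<Sum>m. q n m * g m) - (\<Sum>m. r m * g m)) \<longlonglongrightarrow> 0"
    by (rule Lim_null_comparison[OF always_eventually])
  then show ?thesis
    by (rule LIM_zero_cancel)
qed

section \<open>Lower bounds for ratios of sequences\<close>

text \<open>For positive \<open>a\<close>, \<open>liminf_ratio_ge a X x\<close> says \<open>liminf (X n / a n) \<ge> x\<close>.\<close>

definition liminf_ratio_ge :: "(nat \<Rightarrow> real) \<Rightarrow> (nat \<Rightarrow> real) \<Rightarrow> real \<Rightarrow> bool" where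
  "liminf_ratio_ge a X x \<longleftrightarrow> (\<forall>c<x. eventually (\<lambda>n. c * a n \<le> X n) sequentially)"

lemma liminf_ratio_ge_0:
  assumes "\<And>n. 0 \<le> a n" "\<And>n. 0 \<le> X n"
  shows "liminf_ratio_ge a X 0"
  unfolding liminf_ratio_ge_def
  using assms by (auto intro!: always_eventually order.trans[OF mult_nonpos_nonneg])

lemma liminf_ratio_ge_add:
  assumes "liminf_ratio_ge a X x" "liminf_ratio_ge a Y y"
  shows "liminf_ratio_ge a (\<lambda>n. X n + Y n) (x + y)"
  unfolding liminf_ratio_ge_def
proof (intro allI impI)
  fix c assume "c < x + y"
  define e where "e = (x + y - c) / 2"
  have "0 < e"
    using \<open>c < x + y\<close> by (simp add: e_def)
  then have "eventually (\<lambda>n. (x - e) * a n \<le> X n) sequentially"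
    "eventually (\<lambda>n. (y - e) * a n \<le> Y n) sequentially"
    using assms by (simp_all add: liminf_ratio_ge_def)
  then show "eventually (\<lambda>n. c * a n \<le> X n + Y n) sequentially"
  proof eventually_elim
    case (elim n)
    have "c * a n = (x - e) * a n + (y - e) * a n"
      by (simp add: e_def algebra_simps)
    with elim show ?case
      by linarith
  qed
qed

lemma liminf_ratio_ge_sum:
  assumes "\<And>n. 0 \<le> a n" "\<And>i. i \<in> I \<Longrightarrow> liminf_ratio_ge a (X i) (x i)"
  shows "liminf_ratio_ge a (\<lambda>n. \<Sum>i\<in>I. X i n) (\<Sum>i\<in>I. x i)"
proof (cases "finite I")
  case True
  then show ?thesis
    using assms(2) by (induction I rule: finite_induct)
      (auto intro: liminf_ratio_ge_add liminf_ratio_ge_0 assms(1))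
qed (simp add: liminf_ratio_ge_0 assms(1))

lemma liminf_ratio_ge_cmult:
  assumes "\<And>n. 0 \<le> a n" "0 \<le> k" "liminf_ratio_ge a X x"
  shows "liminf_ratio_ge a (\<lambda>n. k * X n) (k * x)"
proof (cases "k = 0")
  case True
  then show ?thesis
    using liminf_ratio_ge_0[of a "\<lambda>_. 0"] assms(1) by simp
next
  case False
  with assms(2) have "0 < k"
    by simp
  show ?thesis
    unfolding liminf_ratio_ge_def
  proof (intro allI impI)
    fix c assume "c < k * x"
    then have "c / k < x"
      using \<open>0 < k\<close> by (simp add: field_simps)
    then have "eventually (\<lambda>n. c / k * a n \<le> X n) sequentially"
      using assms(3) unfolding liminf_ratio_ge_def by blast
    then show "eventually (\<lambda>n. c * a n \<le> k * X n) sequentially"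
      by eventually_elim (use \<open>0 < k\<close> in \<open>simp add: field_simps\<close>)
  qed
qed

lemma liminf_ratio_ge_mono:
  assumes "liminf_ratio_ge a X x" "eventually (\<lambda>n. X n \<le> Y n) sequentially"
  shows "liminf_ratio_ge a Y x"
  using assms unfolding liminf_ratio_ge_def by (auto elim: eventually_elim2)

lemma liminf_ratio_ge_limit:
  assumes "\<And>K. liminf_ratio_ge a X (s K)" "s \<longlonglongrightarrow> x"
  shows "liminf_ratio_ge a X x"
  unfolding liminf_ratio_ge_def
proof (intro allI impI)
  fix c assume "c < x"
  with assms(2) have "eventually (\<lambda>K. c < s K) sequentially"
    by (rule order_tendstoD)
  then obtain K where "c < s K"
    by (auto simp: eventually_sequentially)
  then show "eventually (\<lambda>n. c * a n \<le> X n) sequentially"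
    using assms(1)[of K] by (simp add: liminf_ratio_ge_def)
qed

lemma liminf_ratio_ge_shift:
  assumes a: "decseq a" "\<And>n. 0 \<le> a n" and X: "\<And>n. 0 \<le> X n" "liminf_ratio_ge a X x"
  shows "liminf_ratio_ge a (\<lambda>n. X (n - i)) x"
  unfolding liminf_ratio_ge_def
proof (intro allI impI)
  fix c assume "c < x"
  then obtain N where N: "\<And>n. N \<le> n \<Longrightarrow> c * a n \<le> X n"
    using X(2) by (auto simp: liminf_ratio_ge_def eventually_sequentially)
  have "c * a n \<le> X (n - i)" if "N + i \<le> n" for n
  proof (cases "0 \<le> c")
    case True
    have "c * a n \<le> c * a (n - i)"
      using True a(1) by (intro mult_left_mono) (auto simp: decseq_def)
    also have "\<dots> \<le> X (n - i)"
      using N that by simp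
    finally show ?thesis .
  next
    case False
    then show ?thesis
      using a(2)[of n] X(1)[of "n - i"] by (meson mult_nonpos_nonneg not_le order.trans less_imp_le)
  qed
  then show "eventually (\<lambda>n. c * a n \<le> X (n - i)) sequentially"
    by (auto simp: eventually_sequentially)
qed

lemma liminf_ratio_ge_truncated_diagonal:
  assumes a: "decseq a" "\<And>n. 0 \<le> a n"
    and nonneg: "\<And>d. 0 \<le> c d" "\<And>d n. 0 \<le> Z d n"
    and lower: "\<And>d. liminf_ratio_ge a (Z d) (z d)"
  shows "liminf_ratio_ge a (\<lambda>n. \<Sum>d\<le>D. c d * Z d (n - d)) (\<Sum>d\<le>D. c d * z d)"
  using a nonneg
  by (intro liminf_ratio_ge_sum liminf_ratio_ge_cmult liminf_ratio_ge_shift lower)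
     (auto intro: mult_nonneg_nonneg)

lemma liminf_ratio_ge_diagonal:
  assumes "decseq a" "\<And>n. 0 \<le> a n"
    and nonneg: "\<And>d. 0 \<le> c d" "\<And>d n. 0 \<le> Z d n"
    and "\<And>d. liminf_ratio_ge a (Z d) (z d)"
    and sums: "(\<lambda>d. c d * z d) sums s"
  shows "liminf_ratio_ge a (\<lambda>n. \<Sum>d\<le>n. c d * Z d (n - d)) s"
proof (rule liminf_ratio_ge_limit)
  show "liminf_ratio_ge a (\<lambda>n. \<Sum>d\<le>n. c d * Z d (n - d)) (\<Sum>d\<le>D. c d * z d)" for D
  proof (rule liminf_ratio_ge_mono[OF liminf_ratio_ge_truncated_diagonal[OF assms(1-5)]])
    show "eventually (\<lambda>n. (\<Sum>d\<le>D. c d * Z d (n - d)) \<le> (\<Sum>d\<le>n. c d * Z d (n - d))) sequentially"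
      using eventually_ge_at_top[of D]
      by eventually_elim (auto intro!: sum_mono2 mult_nonneg_nonneg nonneg)
  qed
  show "(\<lambda>D. \<Sum>d\<le>D. c d * z d) \<longlonglongrightarrow> s"
    using sums by (simp add: sums_def_le)
qed

lemma sum_atMost_two_ends_le:
  fixes f :: "nat \<Rightarrow> real"
  assumes "\<And>i. 0 \<le> f i" and "2 * K < n"
  shows "(\<Sum>i\<le>K. f i) + (\<Sum>i\<le>K. f (n - i)) \<le> (\<Sum>i\<le>n. f i)"
proof -
  have "(\<Sum>i\<le>K. f (n - i)) = (\<Sum>i\<in>(\<lambda>i. n - i) ` {..K}. f i)"
    using assms(2) by (subst sum.reindex) (auto simp: inj_on_def)
  then have "(\<Sum>i\<le>K. f i) + (\<Sum>i\<le>K. f (n - i)) = (\<Sum>i\<in>{..K} \<union> (\<lambda>i. n - i) ` {..K}. f i)"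
    using assms(2) by (subst sum.union_disjoint) auto
  also have "\<dots> \<le> (\<Sum>i\<le>n. f i)"
    using assms by (intro sum_mono2) auto
  finally show ?thesis .
qed

lemma liminf_ratio_ge_convolution:
  assumes a: "decseq a" "\<And>n. 0 \<le> a n"
    and X: "\<And>n. 0 \<le> X n" "X sums sX" "liminf_ratio_ge a X x"
    and Y: "\<And>n. 0 \<le> Y n" "Y sums sY" "liminf_ratio_ge a Y y"
  shows "liminf_ratio_ge a (\<lambda>n. \<Sum>i\<le>n. X i * Y (n - i)) (y * sX + x * sY)"
proof (rule liminf_ratio_ge_limit)
  show "liminf_ratio_ge a (\<lambda>n. \<Sum>i\<le>n. X i * Y (n - i))
          ((\<Sum>i\<le>K. X i * y) + (\<Sum>i\<le>K. Y i * x))" for K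
  proof (rule liminf_ratio_ge_mono)
    show "liminf_ratio_ge a (\<lambda>n. (\<Sum>i\<le>K. X i * Y (n - i)) + (\<Sum>i\<le>K. Y i * X (n - i)))
            ((\<Sum>i\<le>K. X i * y) + (\<Sum>i\<le>K. Y i * x))"
      using liminf_ratio_ge_truncated_diagonal[OF a, of X "\<lambda>_. Y" "\<lambda>_. y" K]
        liminf_ratio_ge_truncated_diagonal[OF a, of Y "\<lambda>_. X" "\<lambda>_. x" K] X Y
      by (intro liminf_ratio_ge_add) (auto simp: mult.commute)
    show "eventually (\<lambda>n. (\<Sum>i\<le>K. X i * Y (n - i)) + (\<Sum>i\<le>K. Y i * X (n - i))
                           \<le> (\<Sum>i\<le>n. X i * Y (n - i))) sequentially"
      using eventually_gt_at_top[of "2 * K"]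
    proof eventually_elim
      case (elim n)
      have "(\<Sum>i\<le>K. Y i * X (n - i)) = (\<Sum>i\<le>K. X (n - i) * Y (n - (n - i)))"
        using elim by (intro sum.cong) auto
      then show ?case
        using sum_atMost_two_ends_le[of "\<lambda>i. X i * Y (n - i)" K n] elim X(1) Y(1) by simp
    qed
  qed
  show "(\<lambda>K. (\<Sum>i\<le>K. X i * y) + (\<Sum>i\<le>K. Y i * x)) \<longlonglongrightarrow> y * sX + x * sY"
    using sums_mult2[OF X(2), of y] sums_mult2[OF Y(2), of x]
    by (intro tendsto_add) (simp_all add: sums_def_le mult.commute)
qed

section \<open>Convolution powers\<close>

fun conv_power :: "(nat \<Rightarrow> real) \<Rightarrow> nat \<Rightarrow> nat \<Rightarrow> real" where
  "conv_power f 0 m = (if m = 0 then 1 else 0)"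
| "conv_power f (Suc d) m = (\<Sum>i\<le>m. f i * conv_power f d (m - i))"

lemma conv_power_nonneg: "(\<And>m. 0 \<le> f m) \<Longrightarrow> 0 \<le> conv_power f d m"
  by (induction d arbitrary: m) (auto intro!: sum_nonneg mult_nonneg_nonneg)

lemma conv_power_at_0: "conv_power f d 0 = f 0 ^ d"
  by (induction d) simp_all

lemma conv_power_sums:
  assumes "\<And>m. 0 \<le> f m" "f sums s"
  shows "conv_power f d sums s ^ d"
proof (induction d)
  case 0
  show ?case
    using sums_single[of 0 "\<lambda>_. 1"] by (simp add: fun_eq_iff if_distrib cong: if_cong)
next
  case (Suc d)
  then show ?case
    using Cauchy_product_sums_nonneg[OF assms(1) conv_power_nonneg[OF assms(1)] assms(2)] by simp
qed

lemma conv_power_mean: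
  assumes nonneg: "\<And>m. 0 \<le> f m" and total: "f sums 1" and mean: "(\<lambda>m. real m * f m) sums \<mu>"
  shows "(\<lambda>m. real m * conv_power f d m) sums (real d * \<mu>)"
proof (induction d)
  case 0
  show ?case
    by (simp add: sums_0)
next
  case (Suc d)
  have "(\<lambda>m. (\<Sum>i\<le>m. (real i * f i) * conv_power f d (m - i))
            + (\<Sum>i\<le>m. f i * (real (m - i) * conv_power f d (m - i))))
          sums (\<mu> * 1 + 1 * (real d * \<mu>))"
    using conv_power_sums[OF nonneg total, of d] Suc nonneg conv_power_nonneg[OF nonneg]
    by (intro sums_add Cauchy_product_sums_nonneg mean total) auto
  moreover have "(\<Sum>i\<le>m. (real i * f i) * conv_power f d (m - i))
            + (\<Sum>i\<le>m. f i * (real (m - i) * conv_power f d (m - i)))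
        = real m * conv_power f (Suc d) m" for m
    by (simp add: sum.distrib[symmetric] sum_distrib_left algebra_simps of_nat_diff)
  ultimately show ?case
    by (simp add: algebra_simps)
qed

section \<open>Critical Galton--Watson trees\<close>

locale critical_gw =
  fixes p :: "nat \<Rightarrow> real"
  assumes p_nonneg: "\<And>d. 0 \<le> p d"
    and p_sums: "p sums 1"
    and p_mean: "(\<lambda>d. real d * p d) sums 1"
    and tree_mass_sums: "tree_mass p sums 1"
    and tree_mass_gt_0: "\<And>n. 0 < tree_mass p n"
    and tree_mass_decseq: "decseq (tree_mass p)"
begin

text \<open>The law of the size of generation \<open>j\<close> under the unconditioned measure, generation 0 being
  the individual attached to the root.\<close>

definition generation_law :: "nat \<Rightarrow> nat \<Rightarrow> real" where
  "generation_law j m = (\<Sum>n. level_mass p j n m)"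

lemma tree_mass_nonneg': "0 \<le> tree_mass p n"
  using tree_mass_gt_0[of n] by simp

lemma level_mass_nonneg': "0 \<le> level_mass p j n m"
  using p_nonneg by (rule level_mass_nonneg)

lemma forest_level_mass_nonneg': "0 \<le> forest_level_mass p j d n m"
  using p_nonneg by (rule forest_level_mass_nonneg)

lemma generation_law_sums: "generation_law j sums 1"
  and summable_level_mass: "summable (\<lambda>n. level_mass p j n m)"
  using sums_swap_nonneg[OF level_mass_nonneg' level_mass_sums tree_mass_sums]
  by (simp_all add: generation_law_def[abs_def])

lemma level_mass_sums_generation_law: "(\<lambda>n. level_mass p j n m) sums generation_law j m"
  unfolding generation_law_def using summable_level_mass by (rule summable_sums)

lemma generation_law_nonneg: "0 \<le> generation_law j m"
  unfolding generation_law_def by (intro suminf_nonneg summable_level_mass level_mass_nonneg')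

lemma generation_law_0: "generation_law 0 m = (if m = 1 then 1 else 0)"
  using tree_mass_sums by (simp add: generation_law_def level_mass_0 sums_iff)

lemma forest_level_mass_sums:
  "(\<lambda>n. forest_level_mass p j d n m) sums conv_power (generation_law j) d m"
proof (induction d arbitrary: m)
  case 0
  show ?case
    using sums_single[of 0 "\<lambda>_. if m = 0 then 1 else 0 :: real"]
    by (simp add: forest_level_mass_0 if_distrib cong: if_cong)
next
  case (Suc d)
  have "(\<lambda>n. \<Sum>i\<le>n. level_mass p j i m' * forest_level_mass p j d (n - i) (m - m'))
          sums (generation_law j m' * conv_power (generation_law j) d (m - m'))" for m'
    using level_mass_nonneg' forest_level_mass_nonneg'
    by (intro Cauchy_product_sums_nonneg level_mass_sums_generation_law Suc.IH)
  then show ?case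
    by (simp add: forest_level_mass_Suc sums_sum)
qed

lemma conv_power_generation_law_sums: "conv_power (generation_law j) d sums 1"
  using conv_power_sums[OF generation_law_nonneg generation_law_sums] by simp

lemma generation_law_Suc:
  "(\<lambda>d. p d * conv_power (generation_law j) d m) sums generation_law (Suc j) m"
proof -
  have "conv_power (generation_law j) d m \<le> 1" for d
    using conv_power_nonneg[of "generation_law j", OF generation_law_nonneg]
      conv_power_generation_law_sums by (rule term_le_sums)
  then have "summable (\<lambda>d. p d * conv_power (generation_law j) d m)"
    using p_nonneg conv_power_nonneg[OF generation_law_nonneg]
    by (intro summable_comparison_test'[OF sums_summable[OF p_sums]]) (simp add: mult_left_le)
  then have "(\<lambda>n. \<Sum>d\<le>n. p d * forest_level_mass p j d (n - d) m)
               sums (\<Sum>d. p d * conv_power (generation_law j) d m)"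
    using p_nonneg forest_level_mass_nonneg' forest_level_mass_sums
    by (intro sums_diagonal_nonneg[where s = "\<lambda>d. p d * conv_power (generation_law j) d m"]
          sums_mult summable_sums) auto
  then show ?thesis
    using \<open>summable _\<close> by (simp add: level_mass_Suc[symmetric] generation_law_def sums_iff)
qed

lemma generation_law_Suc_cmult:
  "(\<lambda>d. p d * (c * conv_power (generation_law j) d m)) sums (c * generation_law (Suc j) m)"
  using sums_mult[OF generation_law_Suc[of j m], of c] by (simp add: algebra_simps)

lemma generation_law_at_0_Suc:
  "(\<lambda>d. p d * generation_law j 0 ^ d) sums generation_law (Suc j) 0"
  using generation_law_Suc[of j 0] by (simp add: conv_power_at_0)

lemma generation_law_mean: "(\<lambda>m. real m * generation_law j m) sums 1"
proof (induction j)
  case 0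
  show ?case
    using sums_single[of 1 "\<lambda>_. 1 :: real"] by (simp add: generation_law_0 if_distrib cong: if_cong)
next
  case (Suc j)
  have "(\<lambda>d. p d * (real m * conv_power (generation_law j) d m))
          sums (real m * generation_law (Suc j) m)" for m
    by (rule generation_law_Suc_cmult)
  moreover have "(\<lambda>m. p d * (real m * conv_power (generation_law j) d m)) sums (p d * real d)" for d
    using conv_power_mean[OF generation_law_nonneg generation_law_sums Suc.IH, of d]
    by (simp add: sums_mult)
  moreover have "(\<lambda>d. p d * real d) sums 1"
    using p_mean by (simp add: mult.commute)
  ultimately show ?case
    using sums_swap_nonneg(1)[of "\<lambda>d m. p d * (real m * conv_power (generation_law j) d m)"]
      p_nonneg conv_power_nonneg[OF generation_law_nonneg]
    by (simp add: sums_iff)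
qed

lemma forest_level_mass_liminf:
  assumes level:
    "\<And>m. liminf_ratio_ge (tree_mass p) (\<lambda>n. level_mass p j n m) (real m * generation_law j m)"
  shows "liminf_ratio_ge (tree_mass p) (\<lambda>n. forest_level_mass p j d n m)
           (real m * conv_power (generation_law j) d m)"
proof (induction d arbitrary: m)
  case 0
  show ?case
    using liminf_ratio_ge_0[OF tree_mass_nonneg' forest_level_mass_nonneg'] by simp
next
  case (Suc d)
  have "liminf_ratio_ge (tree_mass p)
          (\<lambda>n. \<Sum>i\<le>n. level_mass p j i m' * forest_level_mass p j d (n - i) (m - m'))
          (real (m - m') * conv_power (generation_law j) d (m - m') * generation_law j m'
           + real m' * generation_law j m' * conv_power (generation_law j) d (m - m'))" for m'
    by (rule liminf_ratio_ge_convolution[OF tree_mass_decseq tree_mass_nonneg'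
          level_mass_nonneg' level_mass_sums_generation_law level
          forest_level_mass_nonneg' forest_level_mass_sums Suc.IH])
  then have "liminf_ratio_ge (tree_mass p) (\<lambda>n. forest_level_mass p j (Suc d) n m)
          (\<Sum>m'\<le>m. real (m - m') * conv_power (generation_law j) d (m - m') * generation_law j m'
                     + real m' * generation_law j m' * conv_power (generation_law j) d (m - m'))"
    unfolding forest_level_mass_Suc by (intro liminf_ratio_ge_sum tree_mass_nonneg')
  also have "(\<Sum>m'\<le>m. real (m - m') * conv_power (generation_law j) d (m - m') * generation_law j m'
                     + real m' * generation_law j m' * conv_power (generation_law j) d (m - m'))
           = real m * conv_power (generation_law j) (Suc d) m"
    by (simp add: sum_distrib_left of_nat_diff algebra_simps)
  finally show ?case .
qed

lemma level_mass_liminf: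
  "liminf_ratio_ge (tree_mass p) (\<lambda>n. level_mass p j n m) (real m * generation_law j m)"
proof (induction j arbitrary: m)
  case 0
  show ?case
  proof (cases "m = 1")
    case True
    have "c * tree_mass p n \<le> tree_mass p n" if "c < 1" for c n
      using mult_right_mono[of c 1 "tree_mass p n"] that tree_mass_nonneg' by simp
    with True show ?thesis
      by (simp add: liminf_ratio_ge_def level_mass_0 generation_law_0)
  qed (simp add: level_mass_0 generation_law_0 liminf_ratio_ge_0 tree_mass_nonneg')
next
  case (Suc j)
  show ?case
    unfolding level_mass_Suc
    by (rule liminf_ratio_ge_diagonal[OF tree_mass_decseq tree_mass_nonneg' p_nonneg
          forest_level_mass_nonneg' forest_level_mass_liminf[OF Suc.IH] generation_law_Suc_cmult])
qed

lemma suminf_size_biased_inverse: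
  "(\<Sum>m. real m * generation_law j m * (1 / real m)) = 1 - generation_law j 0"
proof -
  have "(\<lambda>m. real m * generation_law j m * (1 / real m))
      = (\<lambda>m. if m = 0 then 0 else generation_law j m)"
    by auto
  moreover have "(\<lambda>m. if m = 0 then 0 else generation_law j m) sums (1 - generation_law j 0)"
    using sums_If_finite_set'[OF generation_law_sums, of "{0}"] by (simp add: sums_iff)
  ultimately show ?thesis
    by (simp add: sums_iff)
qed

theorem tendsto_gw_cond_exp_inverse_level:
  "(\<lambda>N. gw_cond_exp p N (\<lambda>T. 1 / real (level (Suc j) T))) \<longlonglongrightarrow> 1 - generation_law j 0"
proof -
  define q where "q n m = level_mass p j n m / tree_mass p n" for n m
  have q_sums: "q n sums 1" for n
    unfolding q_def
    using sums_divide[OF level_mass_sums[of p j n], of "tree_mass p n"] tree_mass_gt_0[of n]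
    by simp
  have "(\<lambda>n. \<Sum>m. q n m * (1 / real m)) \<longlonglongrightarrow> (\<Sum>m. real m * generation_law j m * (1 / real m))"
  proof (rule scheffe_tendsto_suminf[where B = 1, OF _ q_sums _ generation_law_mean])
    fix m and c :: real
    assume "c < real m * generation_law j m"
    then have "eventually (\<lambda>n. c * tree_mass p n \<le> level_mass p j n m) sequentially"
      using level_mass_liminf by (simp add: liminf_ratio_ge_def)
    then show "eventually (\<lambda>n. c \<le> q n m) sequentially"
      by eventually_elim (simp add: q_def pos_le_divide_eq tree_mass_gt_0)
  qed (auto simp: q_def generation_law_nonneg level_mass_nonneg' tree_mass_nonneg' divide_le_eq_1)
  then have "(\<lambda>n. gw_cond_exp p (Suc n) (\<lambda>T. 1 / real (level (Suc j) T))) \<longlonglongrightarrow> 1 - generation_law j 0"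
    unfolding gw_cond_exp_Suc_inverse_level q_def suminf_size_biased_inverse .
  then show ?thesis
    by (rule filterlim_sequentially_Suc[THEN iffD1])
qed

end

section \<open>The generalised uniform offspring distribution\<close>

lemma discriminant_square:
  fixes A B C X :: "'a::comm_ring_1"
  assumes "A = B + C * X * A + B * X * A ^ 2" and "C = 1 - 2 * B"
  shows "(2 * B * X * A - 1 + C * X) ^ 2 = (1 - X) * (1 - C ^ 2 * X)"
proof -
  have "(2 * B * X * A - 1 + C * X) ^ 2 - (1 - X) * (1 - C ^ 2 * X)
      = 4 * B * X * (B + C * X * A + B * X * A ^ 2 - A)"
    unfolding assms(2) by (simp add: algebra_simps power2_eq_square)
  with assms(1) show ?thesis
    by simp
qed

lemma fps_deriv_of_square_eq:
  fixes Q D :: "'a::comm_ring_1 fps"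
  assumes "Q ^ 2 = D"
  shows "2 * D * fps_deriv Q = Q * fps_deriv D"
  using assms[symmetric] by (simp add: power2_eq_square algebra_simps)

locale uniform_offspring =
  fixes b :: real
  assumes b_pos: "0 < b" and b_lt_1: "b < 1"
begin

abbreviation a :: "nat \<Rightarrow> real" where
  "a \<equiv> tree_mass (pU b)"

lemma pU_nonneg: "0 \<le> pU b d"
  using b_pos b_lt_1 by (simp add: pU_def)

lemma pU_Suc_Suc: "pU b (Suc (Suc d)) = b * pU b (Suc d)"
  by (simp add: pU_def)

lemma pU_generating_sums:
  assumes "\<bar>b * x\<bar> < 1"
  shows "(\<lambda>d. pU b d * x ^ d) sums (b + (1 - b)^2 * x / (1 - b * x))"
proof -
  have "(\<lambda>d. (1 - b)^2 * x * (b * x) ^ d) sums ((1 - b)^2 * x * (1 / (1 - b * x)))"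
    using assms by (intro sums_mult geometric_sums) simp
  then have "(\<lambda>d. pU b (Suc d) * x ^ Suc d) sums ((1 - b)^2 * x / (1 - b * x))"
    by (simp add: pU_def power_mult_distrib algebra_simps)
  then have "(\<lambda>d. pU b d * x ^ d) sums ((1 - b)^2 * x / (1 - b * x) + pU b 0 * x ^ 0)"
    by (rule sums_Suc_iff[THEN iffD1])
  then show ?thesis
    by (simp add: pU_def algebra_simps)
qed

lemma pU_sums: "pU b sums 1"
  using pU_generating_sums[of 1] b_pos b_lt_1 by (simp add: power2_eq_square field_simps)

lemma pU_mean: "(\<lambda>d. real d * pU b d) sums 1"
proof -
  have "(\<lambda>d. (1 - b)^2 * (of_nat (Suc d) * b ^ d)) sums ((1 - b)^2 * (1 / (1 - b)^2))"
    using b_pos b_lt_1 by (intro sums_mult geometric_deriv_sums) simp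
  then have "(\<lambda>d. real (Suc d) * pU b (Suc d)) sums 1"
    using b_lt_1 by (simp add: pU_def algebra_simps)
  then show ?thesis
    using sums_Suc_iff[of "\<lambda>d. real d * pU b d"] by simp
qed

lemma a_0: "a 0 = b"
  by (simp add: tree_mass_def trees_0 pU_def)

lemma a_Suc: "a (Suc n) = (1 - 2 * b) * a n + b * (\<Sum>i\<le>n. a i * a (n - i))"
  using tree_mass_Suc_geometric[of "pU b" b n, OF pU_Suc_Suc]
  by (simp add: pU_def power2_eq_square algebra_simps)

lemma a_pos: "0 < a n"
  using b_pos b_lt_1 by (intro tree_mass_pos pU_nonneg) (simp_all add: pU_def)

definition A :: "real fps" where
  "A = Abs_fps a"

lemma A_quadratic:
  "A = fps_const b + fps_const (1 - 2 * b) * (fps_X * A) + fps_const b * (fps_X * A ^ 2)"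
proof (rule fps_ext)
  fix n
  show "fps_nth A n
      = fps_nth (fps_const b + fps_const (1 - 2 * b) * (fps_X * A)
                 + fps_const b * (fps_X * A ^ 2)) n"
  proof (cases n)
    case 0
    then show ?thesis
      by (simp add: A_def a_0)
  next
    case (Suc k)
    have "fps_nth (A ^ 2) k = (\<Sum>i\<le>k. a i * a (k - i))"
      by (simp add: A_def power2_eq_square fps_mult_nth atLeast0AtMost)
    then show ?thesis
      using Suc by (simp add: A_def a_Suc)
  qed
qed

text \<open>Completing the square in the quadratic equation for \<open>A\<close>: \<open>Q\<close> is a square root of the
  polynomial \<open>D\<close>, so \<open>A\<close> is algebraic and its coefficients satisfy a linear recurrence.\<close>

definition Q :: "real fps" where
  "Q = 2 * fps_const b * fps_X * A - 1 + fps_const (1 - 2 * b) * fps_X"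

definition D :: "real fps" where
  "D = (1 - fps_X) * (1 - fps_const ((1 - 2 * b)^2) * fps_X)"

lemma Q_squared: "Q ^ 2 = D"
proof -
  have "fps_const (1 - 2 * b) = 1 - 2 * fps_const b"
    by (simp add: fps_eq_iff numeral_fps_const)
  then show ?thesis
    unfolding Q_def D_def using A_quadratic
    by (subst discriminant_square) (simp_all add: algebra_simps)
qed

lemma Q_nth_Suc_Suc: "fps_nth Q (Suc (Suc k)) = 2 * b * a (Suc k)"
  by (simp add: Q_def A_def numeral_fps_const mult.assoc)

lemma a_recurrence:
  "2 * real (n + 3) * a (n + 2)
     = (1 + (1 - 2 * b)^2) * real (2 * n + 3) * a (n + 1) - 2 * (1 - 2 * b)^2 * real n * a n"
proof -
  define c where "c = (1 - 2 * b)^2"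
  have D: "D = 1 - fps_const (1 + c) * fps_X + fps_const c * fps_X ^ 2"
    by (simp add: D_def c_def algebra_simps power2_eq_square flip: fps_const_add)
  have dD: "fps_deriv D = fps_const (- (1 + c)) + fps_const (2 * c) * fps_X"
    by (rule fps_ext) (simp add: D)
  have L: "2 * D * fps_deriv Q
      = fps_const 2 * fps_deriv Q - fps_const (2 * (1 + c)) * (fps_X * fps_deriv Q)
                                + fps_const (2 * c) * (fps_X ^ 2 * fps_deriv Q)"
    by (simp add: D numeral_fps_const algebra_simps)
  have R: "Q * fps_deriv D = fps_const (- (1 + c)) * Q + fps_const (2 * c) * (fps_X * Q)"
    by (simp add: dD algebra_simps)
  have "fps_nth (2 * D * fps_deriv Q) (n + 2) = fps_nth (Q * fps_deriv D) (n + 2)"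
    using fps_deriv_of_square_eq[OF Q_squared] by simp
  then have "2 * real (n + 3) * fps_nth Q (n + 3)
      = (1 + c) * real (2 * n + 3) * fps_nth Q (n + 2) - 2 * c * (real n * fps_nth Q (n + 1))"
    unfolding L R fps_add_nth fps_sub_nth fps_mult_left_const_nth fps_X_power_mult_nth
      fps_X_mult_nth fps_deriv_nth
    by (simp add: algebra_simps numeral_3_eq_3)
  moreover have "fps_nth Q (n + 3) = 2 * b * a (n + 2)" "fps_nth Q (n + 2) = 2 * b * a (n + 1)"
    using Q_nth_Suc_Suc[of "n + 1"] Q_nth_Suc_Suc[of n] by (simp_all add: numeral_3_eq_3)
  moreover have "real n * fps_nth Q (n + 1) = real n * (2 * b * a n)"
    by (cases n) (simp_all add: Q_nth_Suc_Suc)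
  ultimately have "2 * b * (2 * real (n + 3) * a (n + 2))
      = 2 * b * ((1 + c) * real (2 * n + 3) * a (n + 1) - 2 * c * real n * a n)"
    by (simp only:) (simp add: algebra_simps)
  then show ?thesis
    using b_pos by (simp add: c_def)
qed

lemma a_decreasing: "a (Suc n) \<le> a n"
proof (induction n)
  case 0
  have "a 1 = b * (1 - b)^2"
    using a_Suc[of 0] by (simp add: a_0 power2_eq_square algebra_simps)
  also have "\<dots> \<le> b"
    using b_pos b_lt_1 by (simp add: power_le_one mult_left_le)
  finally show ?case
    by (simp add: a_0)
next
  case (Suc n)
  define c where "c = (1 - 2 * b)^2"
  have c: "0 \<le> c" "c \<le> 1"
    using b_pos b_lt_1 by (auto simp: c_def abs_square_le_1)
  have "2 * real (n + 3) * a (n + 2)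
      = (1 + c) * real (2 * n + 3) * a (n + 1) - 2 * c * real n * a n"
    unfolding c_def by (rule a_recurrence)
  also have "\<dots> \<le> (1 + c) * real (2 * n + 3) * a (n + 1) - 2 * c * real n * a (n + 1)"
    using Suc c by (simp add: mult_left_mono)
  also have "\<dots> = (real (2 * n + 3) + 3 * c) * a (n + 1)"
    by (simp add: algebra_simps)
  also have "\<dots> \<le> 2 * real (n + 3) * a (n + 1)"
    using c a_pos[of "n + 1"] by (intro mult_right_mono) auto
  finally show ?case
    by simp
qed

lemma a_decseq: "decseq a"
  using a_decreasing by (rule decseq_SucI)

lemma a_le_b: "a n \<le> b"
  using a_decseq[THEN decseqD, of 0 n] by (simp add: a_0)

lemma summable_A_power_series:
  assumes "\<bar>z\<bar> < 1"
  shows "summable (\<lambda>n. a n * z ^ n)"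
proof (rule summable_comparison_test')
  show "summable (\<lambda>n. b * \<bar>z\<bar> ^ n)"
    using assms by (intro summable_mult summable_geometric) simp
  show "norm (a n * z ^ n) \<le> b * \<bar>z\<bar> ^ n" for n
    using a_le_b[of n] a_pos[of n] by (simp add: abs_mult power_abs mult_right_mono)
qed

lemma A_conv_radius: "1 \<le> fps_conv_radius A"
  unfolding fps_conv_radius_def A_def
  by (rule conv_radius_geI_ex') (simp add: summable_A_power_series)

lemma eval_A_quadratic:
  assumes "\<bar>z\<bar> < 1"
  shows "eval_fps A z = b + (1 - 2 * b) * z * eval_fps A z + b * z * eval_fps A z ^ 2"
proof -
  have "ereal (norm z) < 1"
    using assms by simp
  then have rA: "ereal (norm z) < fps_conv_radius A"
    using A_conv_radius by (rule less_le_trans)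
  have prod: "eval_fps (F * G) z = eval_fps F z * eval_fps G z
                \<and> ereal (norm z) < fps_conv_radius (F * G)"
    if "ereal (norm z) < fps_conv_radius F" "ereal (norm z) < fps_conv_radius G" for F G
    using that by (auto simp: eval_fps_mult intro: less_le_trans[OF _ fps_conv_radius_mult])
  have rA2: "ereal (norm z) < fps_conv_radius (A ^ 2)"
    using rA by (auto intro: less_le_trans[OF _ fps_conv_radius_power])
  note XA = prod[OF _ rA, of fps_X] and XA2 = prod[OF _ rA2, of fps_X]
  note cXA = prod[OF _ conjunct2[OF XA], of "fps_const (1 - 2 * b)"]
    and cXA2 = prod[OF _ conjunct2[OF XA2], of "fps_const b"]
  have "eval_fps A z = eval_fps (fps_const b + fps_const (1 - 2 * b) * (fps_X * A)
                                 + fps_const b * (fps_X * A ^ 2)) z"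
    using A_quadratic by simp
  also have "\<dots> = b + (1 - 2 * b) * (z * eval_fps A z) + b * (z * eval_fps A z ^ 2)"
    using cXA cXA2 XA XA2 rA
    by (simp add: eval_fps_add eval_fps_power less_le_trans[OF _ fps_conv_radius_add])
  finally show ?thesis
    by (simp add: algebra_simps)
qed

lemma eval_A_tendsto_1: "(eval_fps A \<longlongrightarrow> 1) (at_left 1)"
proof -
  define c where "c = (1 - 2 * b)^2"
  define R where "R z = 2 * b * z * eval_fps A z - 1 + (1 - 2 * b) * z" for z
  have near_1: "eventually (\<lambda>z. 0 < z \<and> z < (1::real)) (at_left 1)"
    using eventually_at_left_real[of 0 "1::real"] by simp
  have "eventually (\<lambda>z. norm (R z) \<le> sqrt ((1 - z) * (1 - c * z))) (at_left 1)"
    using near_1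
  proof eventually_elim
    case (elim z)
    then have "R z ^ 2 = (1 - z) * (1 - c * z)"
      unfolding R_def c_def by (intro discriminant_square eval_A_quadratic) auto
    then show ?case
      by (simp add: real_sqrt_abs[symmetric])
  qed
  moreover have "((\<lambda>z. sqrt ((1 - z) * (1 - c * z))) \<longlongrightarrow> 0) (at_left 1)"
    by (rule tendsto_eq_intros refl | simp)+
  ultimately have "(R \<longlongrightarrow> 0) (at_left 1)"
    by (rule Lim_null_comparison)
  then have "((\<lambda>z. (R z + 1 - (1 - 2 * b) * z) / (2 * b * z))
               \<longlongrightarrow> (0 + 1 - (1 - 2 * b) * 1) / (2 * b * 1))
               (at_left 1)"
    using b_pos by (intro tendsto_intros) auto
  then have "((\<lambda>z. (R z + 1 - (1 - 2 * b) * z) / (2 * b * z)) \<longlongrightarrow> 1) (at_left 1)"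
    using b_pos by simp
  moreover have
    "eventually (\<lambda>z. (R z + 1 - (1 - 2 * b) * z) / (2 * b * z) = eval_fps A z) (at_left 1)"
    using near_1 by eventually_elim (use b_pos in \<open>simp add: R_def\<close>)
  ultimately show ?thesis
    by (rule Lim_transform_eventually)
qed

lemma a_sums: "a sums 1"
proof (rule nonneg_power_series_sums_of_tendsto_left)
  show "summable (\<lambda>n. a n * z ^ n)" if "0 \<le> z" "z < 1" for z
    using that by (intro summable_A_power_series) simp
  show "((\<lambda>z. \<Sum>n. a n * z ^ n) \<longlongrightarrow> 1) (at_left 1)"
    using eval_A_tendsto_1 by (simp add: eval_fps_def[abs_def] A_def)
qed (use a_pos in \<open>simp add: less_imp_le\<close>)

end

sublocale uniform_offspring \<subseteq> critical_gw "pU b"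
  using pU_nonneg pU_sums pU_mean a_sums a_pos a_decseq by unfold_locales

context uniform_offspring
begin

text \<open>The offspring generating function \<open>f\<close> is fractional linear with \<open>f 1 = f' 1 = 1\<close>, so
  \<open>1 / (1 - f s) = 1 / (1 - s) + b / (1 - b)\<close>; the extinction probabilities by generation \<open>j\<close>
  are the iterates of \<open>f\<close> at \<open>0\<close>.\<close>

lemma generation_law_at_0:
  "generation_law j 0 < 1 \<and> 1 / (1 - generation_law j 0) = 1 + real j * b / (1 - b)"
proof (induction j)
  case 0
  show ?case
    by (simp add: generation_law_0)
next
  case (Suc j)
  define s where "s = generation_law j 0"
  have s: "0 \<le> s" "s < 1"
    using Suc generation_law_nonneg by (auto simp: s_def)
  then have "b * s < 1" "\<bar>b * s\<bar> < 1"
    using b_pos b_lt_1 mult_strict_mono[of b 1 s 1] by (auto simp: abs_mult)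
  then have "1 - generation_law (Suc j) 0 = 1 - (b + (1 - b)^2 * s / (1 - b * s))"
    using generation_law_at_0_Suc[of j] pU_generating_sums[of s] by (simp add: s_def sums_iff)
  also have "\<dots> = (1 - b) * (1 - s) / (1 - b * s)"
    using b_lt_1 s \<open>b * s < 1\<close> by (simp add: field_simps power2_eq_square)
  finally have one_minus: "1 - generation_law (Suc j) 0 = (1 - b) * (1 - s) / (1 - b * s)" .
  have "1 / (1 - generation_law (Suc j) 0) = 1 / (1 - s) + b / (1 - b)"
    unfolding one_minus using b_lt_1 s \<open>b * s < 1\<close> by (simp add: field_simps)
  also have "\<dots> = 1 + real (Suc j) * b / (1 - b)"
    by (simp only: s_def conjunct2[OF Suc]) (simp add: add_divide_distrib[symmetric] algebra_simps)
  finally have "1 / (1 - generation_law (Suc j) 0) = 1 + real (Suc j) * b / (1 - b)" .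
  moreover have "0 < (1 - b) * (1 - s) / (1 - b * s)"
    using b_lt_1 s \<open>b * s < 1\<close> by (intro divide_pos_pos mult_pos_pos) auto
  ultimately show ?case
    using one_minus by simp
qed

lemma one_minus_generation_law_at_0: "1 - generation_law j 0 = 1 / (1 + real j * b / (1 - b))"
proof -
  have "1 - generation_law j 0 = 1 / (1 / (1 - generation_law j 0))"
    by simp
  then show ?thesis
    by (simp only: conjunct2[OF generation_law_at_0])
qed

lemma fU_eq:
  assumes "\<bar>b * x\<bar> < 1"
  shows "fU b x = b + (1 - b)^2 * x / (1 - b * x)"
  using pU_generating_sums[OF assms] by (simp add: fU_def sums_iff)

lemma fU_second_derivative_at_1: "deriv (deriv (fU b)) 1 = 2 * b / (1 - b)"
proof -
  define U where "U = {x. \<bar>b * x\<bar> < 1}"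
  have "open U"
    unfolding U_def by (intro open_Collect_less continuous_intros)
  have first: "deriv (fU b) x = ((1 - b) / (1 - b * x))^2" if "x \<in> U" for x
  proof -
    have "eventually (\<lambda>y. fU b y = b + (1 - b)^2 * y / (1 - b * y)) (nhds x)"
      using eventually_nhds_in_open[OF \<open>open U\<close> that] by eventually_elim (simp add: U_def fU_eq)
    then have "deriv (fU b) x = deriv (\<lambda>y. b + (1 - b)^2 * y / (1 - b * y)) x"
      by (rule deriv_cong_ev) simp
    also have "\<dots> = (1 - b)^2 / (1 - b * x)^2"
      using that by (intro DERIV_imp_deriv)
        (auto intro!: derivative_eq_intros simp: U_def power2_eq_square field_simps)
    finally show ?thesis
      by (simp add: power_divide)
  qed
  have "1 \<in> U"
    using b_pos b_lt_1 by (simp add: U_def)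
  have "eventually (\<lambda>y. deriv (fU b) y = ((1 - b) / (1 - b * y))^2) (nhds 1)"
    using eventually_nhds_in_open[OF \<open>open U\<close> \<open>1 \<in> U\<close>] by eventually_elim (rule first)
  then have "deriv (deriv (fU b)) 1 = deriv (\<lambda>y. ((1 - b) / (1 - b * y))^2) 1"
    by (rule deriv_cong_ev) simp
  also have "\<dots> = 2 * b / (1 - b)"
  proof (rule DERIV_imp_deriv)
    show "((\<lambda>y. ((1 - b) / (1 - b * y))^2) has_real_derivative 2 * b / (1 - b)) (at 1)"
      using b_lt_1 by (auto intro!: derivative_eq_intros simp: field_simps)
        (simp add: algebra_simps power2_eq_square power4_eq_xxxx)
  qed
  finally show ?thesis .
qed

end

theorem mainTheorem3:
  fixes b :: real and k :: nat
  assumes "0 < b" and "b < 1" and "k \<ge> 1"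
  shows "((\<lambda>N. gw_cond_exp (pU b) N (\<lambda>T. 1 / real (Dcard k T)))
            \<longlonglongrightarrow> 1 / (1 + (real k - 1) * b / (1 - b)))
       \<and> 1 / (1 + (real k - 1) * b / (1 - b))
           = 1 / (1 + deriv (deriv (fU b)) 1 * (real k - 1) / 2)"
proof -
  interpret uniform_offspring b
    using assms(1,2) by unfold_locales
  obtain j where k: "k = Suc j"
    using assms(3) by (cases k) auto
  have "(\<lambda>N. gw_cond_exp (pU b) N (\<lambda>T. 1 / real (level k T))) \<longlonglongrightarrow> 1 - generation_law j 0"
    unfolding k by (rule tendsto_gw_cond_exp_inverse_level)
  moreover have "1 - generation_law j 0 = 1 / (1 + (real k - 1) * b / (1 - b))"
    using one_minus_generation_law_at_0[of j] k by simp
  moreover have "deriv (deriv (fU b)) 1 * (real k - 1) / 2 = (real k - 1) * b / (1 - b)"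
    using assms(2) by (simp add: fU_second_derivative_at_1 field_simps)
  ultimately show ?thesis
    by (simp only:)
qed

end
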